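(* For $n\in\mathbb Z$ and generic $t$, the limit $$e_n(X;t):=\lim_{q\to0}\frac{E_n(X)}{E_n(t^{-1/2})},$$ taken with $t$ fixed, exists in $\mathbb C(t^{1/2})[X^{\pm1}]$. Here $E_n(t^{-1/2})$ is the value of $E_n$ at $X=t^{-1/2}$. Moreover, in the affine Hecke algebra $\mathcal H_{\rm aff}$ with parameter $t$ one has $$e_n(Y;t^{-1})\,\mathcal P_+=\psi_n,$$ where $e_n(Y;t^{-1})$ is obtained from $e_n(X;t)$ by substituting $X\mapsto Y$ and $t\mapsto 1/t$.
   Context: DAHA side. Let $0<q<1$ and let $t$ be a nonzero parameter; write $t=q^k$. The DAHA $\mathcal H$ of type $A_1$ is generated by $T,X^{\pm1},Y^{\pm1}$ with relations $TXT=X^{-1}$, $TY^{-1}T=Y$, $Y^{-1}X^{-1}YXT^2=q^{-1/2}$, and $(T-t^{1/2})(T+t^{-1/2})=0$. It acts on $\mathcal X=\mathbb C[X^{\pm1}]$, with $X=q^x$, as follows: $X$ by multiplication; $T\mapsto t^{1/2}s+\frac{t^{1/2}-t^{-1/2}}{X^2-1}(s-1)$; $Y\mapsto spT$. Here $s(X)=X^{-1}$ and $p(X)=q^{1/2}X$; that is, $(sf)(x)=f(-x)$ and $(pf)(x)=f(x+\tfrac12)$. Nonsymmetric polynomials $E_n$, $n\in\mathbb Z$. Set $n_\sharp=\frac{n-k}2$ for $n\le0$ and $n_\sharp=\frac{n+k}2$ for $n>0$. Then $E_n\in\mathcal X$ is the element with $Y(E_n)=q^{-n_\sharp}E_n$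 (so the eigenvalue is $q^{-n/2}t^{\mp1/2}$) and $E_n=X^n+(\text{lower terms})$. Here "lower terms" means a linear combination of monomials $X^j$ with either $|j|<|n|$, or $j=-n>0$. The coefficients of $E_n$ are rational functions of $q^{1/2},t^{1/2}$. AHA side. $\mathcal H_{\rm aff}$ is the $\mathbb C(t^{1/2})$-algebra generated by $T$ and $\pi$ subject to $\pi^2=1$ and $(T-t^{1/2})(T+t^{-1/2})=0$. Set $$Y=\pi T,\qquad \mathcal P_+=\frac{1+t^{1/2}T}{1+t}.$$ For $n\ge0$ put $T_{n\omega}=(\pi T)^n$, and for $n<0$ put $T_{n\omega}=(T\pi)^{-n}$. Define $$\psi_n=t^{-|n|/2}\,T_{n\omega}\,\mathcal P_+.$$ *)

theory Defs
  imports "HOL-Analysis.Analysis" "HOL-Library.Poly_Mapping" "HOL-Computational_Algebra.Polynomial"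
begin

text \<open>Laurent polynomials C[X, X^-1] as finitely supported coefficient maps int to complex.
  Parameters: a = q^(1/2) and b = t^(1/2).\<close>

type_synonym lpoly = "int \<Rightarrow>\<^sub>0 complex"

definition lsc :: "complex \<Rightarrow> lpoly \<Rightarrow> lpoly" where
  "lsc c f = (\<Sum>j\<in>Poly_Mapping.keys f. Poly_Mapping.single j (c * Poly_Mapping.lookup f j))"

definition leval :: "lpoly \<Rightarrow> complex \<Rightarrow> complex" where
  "leval f x = (\<Sum>j\<in>Poly_Mapping.keys f. Poly_Mapping.lookup f j * x powi j)"

definition sX :: "lpoly \<Rightarrow> lpoly" where
  "sX f = (\<Sum>j\<in>Poly_Mapping.keys f. Poly_Mapping.single (-j) (Poly_Mapping.lookup f j))"

definition pX :: "complex \<Rightarrow> lpoly \<Rightarrow> lpoly" where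
  "pX a f = (\<Sum>j\<in>Poly_Mapping.keys f. Poly_Mapping.single j (a powi j * Poly_Mapping.lookup f j))"

text \<open>c * (X^-j - X^j) / (X^2 - 1), written out as a Laurent polynomial\<close>
definition dd_mono :: "complex \<Rightarrow> int \<Rightarrow> lpoly" where
  "dd_mono c j =
     (if 0 < j then - (\<Sum>i\<in>{0..<nat j}. Poly_Mapping.single (-j + 2 * int i) c)
      else if j < 0 then (\<Sum>i\<in>{0..<nat (-j)}. Poly_Mapping.single (j + 2 * int i) c)
      else 0)"

text \<open>the divided difference (s - 1) f / (X^2 - 1)\<close>
definition ddX :: "lpoly \<Rightarrow> lpoly" where
  "ddX f = (\<Sum>j\<in>Poly_Mapping.keys f. dd_mono (Poly_Mapping.lookup f j) j)"

definition TX :: "complex \<Rightarrow> lpoly \<Rightarrow> lpoly" where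
  "TX b f = lsc b (sX f) + lsc (b - inverse b) (ddX f)"

definition YX :: "complex \<Rightarrow> complex \<Rightarrow> lpoly \<Rightarrow> lpoly" where
  "YX a b f = sX (pX a (TX b f))"

definition eigE :: "complex \<Rightarrow> complex \<Rightarrow> int \<Rightarrow> complex" where
  "eigE a b n = (if n \<le> 0 then a powi (-n) * b else a powi (-n) * inverse b)"

definition isE :: "complex \<Rightarrow> complex \<Rightarrow> int \<Rightarrow> lpoly \<Rightarrow> bool" where
  "isE a b n E \<longleftrightarrow>
     YX a b E = lsc (eigE a b n) E \<and> Poly_Mapping.lookup E n = 1 \<and>
     (\<forall>j\<in>Poly_Mapping.keys E. j = n \<or> \<bar>j\<bar> < \<bar>n\<bar> \<or> (j = -n \<and> 0 < j))"

definition Emac :: "complex \<Rightarrow> complex \<Rightarrow> int \<Rightarrow> lpoly" where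
  "Emac a b n = (THE E. isE a b n E)"

definition Eratio :: "complex \<Rightarrow> complex \<Rightarrow> int \<Rightarrow> lpoly" where
  "Eratio a b n = lsc (inverse (leval (Emac a b n) (inverse b))) (Emac a b n)"

text \<open>Affine Hecke algebra side: an arbitrary ring 'r which is a complex algebra via a
  ring homomorphism emb with central image.\<close>
definition calg_emb :: "(complex \<Rightarrow> 'r::ring_1) \<Rightarrow> bool" where
  "calg_emb emb \<longleftrightarrow> emb 1 = 1 \<and> (\<forall>x y. emb (x + y) = emb x + emb y) \<and>
     (\<forall>x y. emb (x * y) = emb x * emb y) \<and> (\<forall>c r. emb c * r = r * emb c)"

definition aeval :: "(complex \<Rightarrow> 'r::ring_1) \<Rightarrow> 'r \<Rightarrow> 'r \<Rightarrow> lpoly \<Rightarrow> 'r" where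
  "aeval emb Y Yi e = (\<Sum>j\<in>Poly_Mapping.keys e. emb (Poly_Mapping.lookup e j) * (if 0 \<le> j then Y ^ nat j else Yi ^ nat (-j)))"

definition Pplus :: "(complex \<Rightarrow> 'r::ring_1) \<Rightarrow> complex \<Rightarrow> 'r \<Rightarrow> 'r" where
  "Pplus emb b T = emb (inverse (1 + b\<^sup>2)) * (1 + emb b * T)"

definition Tnw :: "'r::ring_1 \<Rightarrow> 'r \<Rightarrow> int \<Rightarrow> 'r" where
  "Tnw T \<pi> n = (if 0 \<le> n then (\<pi> * T) ^ nat n else (T * \<pi>) ^ nat (-n))"

definition psi :: "(complex \<Rightarrow> 'r::ring_1) \<Rightarrow> complex \<Rightarrow> 'r \<Rightarrow> 'r \<Rightarrow> int \<Rightarrow> 'r" where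
  "psi emb b T \<pi> n = emb (inverse b ^ nat \<bar>n\<bar>) * Tnw T \<pi> n * Pplus emb b T"

end

theory Submission
  imports Defs
begin

text \<open>\<open>E\<^sub>n\<close> is the unique eigenvector of \<open>Y\<close> of the form \<open>X\<^sup>n + lower terms\<close>:
  \<open>Y\<close> is triangular for the order \<open>0 \<prec> 1 \<prec> -1 \<prec> 2 \<prec> -2 \<prec> \<dots>\<close>, and for small \<open>q\<close> its
  diagonal entries \<open>q\<^sup>-\<^sup>j\<^sup>\<sharp>\<close> are pairwise distinct, so each coefficient of \<open>E\<^sub>n\<close> is a
  combination of coefficients of higher rank divided by an eigenvalue gap. As \<open>q \<rightarrow> 0\<close>
  these quotients tend to \<open>0\<close> when \<open>n \<ge> 0\<close> and to \<open>-t\<^sup>\<mp>\<^sup>1\<^sup>/\<^sup>2\<close> when \<open>n < 0\<close>, so by induction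
  along the order the coefficients converge, giving \<open>e\<^sub>n = X\<^sup>n\<close> for \<open>n \<ge> 0\<close> and
  \<open>e\<^sub>n = t\<^sup>-\<^sup>n\<^sup>/\<^sup>2 (X\<^sup>n + (1 - t) \<Sum> X\<^sup>j)\<close>, summed over \<open>n < j \<le> -n\<close> with \<open>j \<equiv> n (mod 2)\<close>,
  for \<open>n < 0\<close>.
  On the Hecke side \<open>T\<^sub>n\<^sub>\<omega> = (T \<pi>)\<^sup>m = T Y\<^sup>m T\<^sup>-\<^sup>1\<close> for \<open>n = -m\<close>; the Bernstein relation
  \<open>T Y = Y\<^sup>-\<^sup>1 T + (t\<^sup>1\<^sup>/\<^sup>2 - t\<^sup>-\<^sup>1\<^sup>/\<^sup>2) Y\<close> moves \<open>T\<close> past \<open>Y\<^sup>m\<close>, and \<open>T\<close> acts on \<open>\<P>\<^sub>+\<close> by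
  \<open>t\<^sup>1\<^sup>/\<^sup>2\<close>, which produces exactly \<open>e\<^sub>n(Y; t\<^sup>-\<^sup>1) \<P>\<^sub>+\<close>.\<close>

abbreviation lk where "lk \<equiv> Poly_Mapping.lookup"
abbreviation ks where "ks \<equiv> Poly_Mapping.keys"

lemma lookup_lsc: "lk (lsc c f) i = c * lk f i"
  unfolding lsc_def lookup_sum lookup_single
  by (cases "i \<in> ks f") (auto simp: when_def in_keys_iff)

lemma lookup_sX: "lk (sX f) i = lk f (-i)"
proof -
  have "lk (sX f) i = (\<Sum>j\<in>ks f. if j = -i then lk f j else 0)"
    unfolding sX_def lookup_sum lookup_single by (intro sum.cong) (auto simp: when_def)
  then show ?thesis by (cases "-i \<in> ks f") (auto simp: in_keys_iff)
qed

lemma lookup_pX: "lk (pX a f) i = a powi i * lk f i"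
  unfolding pX_def lookup_sum lookup_single
  by (cases "i \<in> ks f") (auto simp: when_def in_keys_iff)

lemma sum_when_inj:
  assumes "inj_on g I" "finite I"
  shows "(\<Sum>i\<in>I. (c when g i = k)) = (c when k \<in> g ` I)"
proof -
  have "(\<Sum>i\<in>I. (c when g i = k)) = (\<Sum>x\<in>g ` I. (c when x = k))"
    using assms(1) by (simp add: sum.reindex)
  also have "\<dots> = (c when k \<in> g ` I)"
    using assms(2) by (simp add: when_def sum.delta')
  finally show ?thesis .
qed

lemma image_step2_atLeastLessThan:
  "k \<in> (\<lambda>i. s + 2 * int i) ` {0..<m} \<longleftrightarrow> s \<le> k \<and> k < s + 2 * int m \<and> even (k - s)"
proof
  assume h: "s \<le> k \<and> k < s + 2 * int m \<and> even (k - s)"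
  then have "even (k - s)" by blast
  then obtain d where "k - s = 2 * d" by (rule evenE)
  with h have "k = s + 2 * int (nat d)" "nat d \<in> {0..<m}" by auto
  then show "k \<in> (\<lambda>i. s + 2 * int i) ` {0..<m}" by blast
qed auto

text \<open>Coefficient of \<open>X^k\<close> in the divided difference \<open>(X^-j - X^j) / (X^2 - 1)\<close>.\<close>
definition dd_coeff :: "int \<Rightarrow> int \<Rightarrow> complex" where
  "dd_coeff j k = (if -\<bar>j\<bar> \<le> k \<and> k < \<bar>j\<bar> \<and> even (k + j) then - of_int (sgn j) else 0)"

lemma dd_coeff_uminus: "dd_coeff (-j) k = - dd_coeff j k"
  unfolding dd_coeff_def by auto

lemma lookup_dd_mono: "lk (dd_mono c j) k = c * dd_coeff j k"
proof -
  have inj: "inj_on (\<lambda>i. s + 2 * int i) I" for s I by (auto simp: inj_on_def)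
  consider "0 < j" | "j < 0" | "j = 0" by linarith
  then show ?thesis
  proof cases
    case 1
    then show ?thesis
      unfolding dd_mono_def if_P[OF 1] lookup_uminus lookup_sum lookup_single
        sum_when_inj[OF inj[of "-j"] finite_atLeastLessThan] image_step2_atLeastLessThan
      by (auto simp: dd_coeff_def when_def)
  next
    case 2
    then have "\<not> 0 < j" by simp
    with 2 show ?thesis
      unfolding dd_mono_def if_not_P[OF \<open>\<not> 0 < j\<close>] if_P[OF 2] lookup_sum lookup_single
        sum_when_inj[OF inj[of j] finite_atLeastLessThan] image_step2_atLeastLessThan
      by (auto simp: dd_coeff_def when_def)
  qed (simp add: dd_mono_def dd_coeff_def)
qed

lemma lookup_YX: "lk (YX a b f) i =
   a powi (-i) * (b * lk f i + (b - inverse b) * (\<Sum>j\<in>ks f. lk f j * dd_coeff j (-i)))"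
  unfolding YX_def TX_def ddX_def
  by (simp add: lookup_sX lookup_pX lookup_add lookup_lsc lookup_sum lookup_dd_mono)

definition exp_rank :: "int \<Rightarrow> int" where
  "exp_rank j = (if 0 < j then 2 * j - 1 else - 2 * j)"

definition lower_exps :: "int \<Rightarrow> int set" where
  "lower_exps n = {j. exp_rank j \<le> exp_rank n}"

lemma lower_exps_subset: "lower_exps n \<subseteq> {-\<bar>n\<bar>..\<bar>n\<bar>}"
  unfolding lower_exps_def exp_rank_def by auto

lemma finite_lower_exps [simp]: "finite (lower_exps n)"
  using lower_exps_subset finite_subset by blast

lemma self_in_lower_exps [simp]: "n \<in> lower_exps n"
  unfolding lower_exps_def by simp

lemma exp_rank_inj: "exp_rank i = exp_rank j \<Longrightarrow> i = j"
  unfolding exp_rank_def by (auto split: if_splits; presburger)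

lemma lower_exps_iff: "(j = n \<or> \<bar>j\<bar> < \<bar>n\<bar> \<or> (j = -n \<and> 0 < j)) \<longleftrightarrow> j \<in> lower_exps n"
  unfolding lower_exps_def exp_rank_def by auto

lemma lower_exps_nonneg: "0 \<le> n \<Longrightarrow> i \<in> lower_exps n - {n} \<Longrightarrow> i < n"
  unfolding lower_exps_def exp_rank_def by (auto split: if_splits)

lemma lower_exps_neg: "n < 0 \<Longrightarrow> lower_exps n = {n..-n}"
  unfolding lower_exps_def exp_rank_def by auto

lemma lower_exps_induct:
  assumes "\<And>i. (\<And>j. j \<in> lower_exps n \<Longrightarrow> exp_rank i < exp_rank j \<Longrightarrow> P j) \<Longrightarrow> P i"
  shows "P i"
proof (induction i rule: measure_induct_rule[where f = "\<lambda>i. nat (exp_rank n - exp_rank i)"])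
  case (less i)
  show ?case
    by (rule assms, rule less) (auto simp: lower_exps_def)
qed

lemma dd_coeff_triangular: "dd_coeff j (-i) \<noteq> 0 \<Longrightarrow> i \<noteq> j \<Longrightarrow> exp_rank i < exp_rank j"
  unfolding dd_coeff_def exp_rank_def by (auto split: if_splits)

lemma YX_diagonal: "a powi (-i) * (b + (b - inverse b) * dd_coeff i (-i)) = eigE a b i"
  unfolding dd_coeff_def eigE_def by (auto simp: sgn_if)

lemma sum_keys_superset:
  assumes "ks f \<subseteq> S" "finite S" "\<And>j. h j 0 = 0"
  shows "(\<Sum>j\<in>ks f. h j (lk f j)) = (\<Sum>j\<in>S. h j (lk f j))"
  using assms by (intro sum.mono_neutral_left) (auto simp: in_keys_iff)

lemma lookup_YX_split:
  assumes "ks f \<subseteq> S" "finite S" "i \<in> S"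
  shows "lk (YX a b f) i = eigE a b i * lk f i
    + a powi (-i) * (b - inverse b) * (\<Sum>j\<in>S - {i}. lk f j * dd_coeff j (-i))"
proof -
  have "(\<Sum>j\<in>ks f. lk f j * dd_coeff j (-i)) = (\<Sum>j\<in>S. lk f j * dd_coeff j (-i))"
    by (rule sum_keys_superset[OF assms(1,2)]) simp
  also have "\<dots> = lk f i * dd_coeff i (-i) + (\<Sum>j\<in>S - {i}. lk f j * dd_coeff j (-i))"
    using assms by (simp add: sum.remove)
  finally show ?thesis
    unfolding lookup_YX YX_diagonal[of a i b, symmetric] by (simp add: algebra_simps)
qed

definition eig_separated :: "complex \<Rightarrow> complex \<Rightarrow> int \<Rightarrow> bool" where
  "eig_separated a b n \<longleftrightarrow> a \<noteq> 0 \<and> (\<forall>i\<in>lower_exps n - {n}. eigE a b n \<noteq> eigE a b i)"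

definition resolvent :: "complex \<Rightarrow> complex \<Rightarrow> int \<Rightarrow> int \<Rightarrow> complex" where
  "resolvent a b n i = a powi (-i) / (eigE a b n - eigE a b i)"

text \<open>Below the leading term, the eigenvalue equation solves for each coefficient in terms of
  the coefficients of higher rank.\<close>
definition recursion_rhs ::
    "complex \<Rightarrow> complex \<Rightarrow> int \<Rightarrow> (int \<Rightarrow> complex) \<Rightarrow> int \<Rightarrow> complex" where
  "recursion_rhs a b n f i =
     (b - inverse b) * (\<Sum>j\<in>lower_exps n - {i}. f j * dd_coeff j (-i)) * resolvent a b n i"

lemma recursion_rhs_cong:
  assumes "\<And>j. j \<in> lower_exps n \<Longrightarrow> exp_rank i < exp_rank j \<Longrightarrow> f j = g j"
  shows "recursion_rhs a b n f i = recursion_rhs a b n g i"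
proof -
  have "f j * dd_coeff j (-i) = g j * dd_coeff j (-i)" if "j \<in> lower_exps n - {i}" for j
    using assms[of j] dd_coeff_triangular[of j i] that by (cases "dd_coeff j (-i) = 0") auto
  then show ?thesis unfolding recursion_rhs_def by (metis (no_types, lifting) sum.cong)
qed

lemma lookup_YX_outside:
  assumes K: "ks f \<subseteq> lower_exps n" and i: "i \<notin> lower_exps n - {n}"
  shows "lk (YX a b f) i = eigE a b n * lk f i"
proof -
  have upper: "(\<Sum>j\<in>lower_exps n - {i}. lk f j * dd_coeff j (-i)) = 0"
  proof (intro sum.neutral ballI)
    fix j assume j: "j \<in> lower_exps n - {i}"
    show "lk f j * dd_coeff j (-i) = 0"
      using dd_coeff_triangular[of j i] j i unfolding lower_exps_def by force
  qed
  show ?thesis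
  proof (cases "i = n")
    case True
    then show ?thesis using lookup_YX_split[OF K finite_lower_exps] upper by simp
  next
    case False
    then have "i \<notin> lower_exps n" using i by simp
    then have "lk f i = 0" "(\<Sum>j\<in>ks f. lk f j * dd_coeff j (-i)) = 0"
      using K upper
        sum_keys_superset[OF K finite_lower_exps, where h = "\<lambda>j x. x * dd_coeff j (-i)"]
      by (auto simp: in_keys_iff)
    then show ?thesis unfolding lookup_YX by simp
  qed
qed

lemma lookup_YX_inside:
  assumes sep: "eig_separated a b n" and K: "ks f \<subseteq> lower_exps n"
    and i: "i \<in> lower_exps n - {n}"
  shows "lk (YX a b f) i = eigE a b n * lk f i \<longleftrightarrow> lk f i = recursion_rhs a b n (lk f) i"
proof -
  define r where "r = a powi (-i) * (b - inverse b) *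
    (\<Sum>j\<in>lower_exps n - {i}. lk f j * dd_coeff j (-i))"
  have gap: "eigE a b n - eigE a b i \<noteq> 0" using sep i unfolding eig_separated_def by auto
  have "lk (YX a b f) i = eigE a b i * lk f i + r"
    unfolding r_def using lookup_YX_split[OF K finite_lower_exps] i by simp
  then have "lk (YX a b f) i = eigE a b n * lk f i \<longleftrightarrow> r = (eigE a b n - eigE a b i) * lk f i"
    by (auto simp: algebra_simps)
  also have "\<dots> \<longleftrightarrow> lk f i = recursion_rhs a b n (lk f) i"
    unfolding recursion_rhs_def resolvent_def r_def using gap by (auto simp: field_simps)
  finally show ?thesis .
qed

lemma isE_iff_recursion:
  assumes sep: "eig_separated a b n"
  shows "isE a b n f \<longleftrightarrow> ks f \<subseteq> lower_exps n \<and> lk f n = 1 \<and>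
    (\<forall>i\<in>lower_exps n - {n}. lk f i = recursion_rhs a b n (lk f) i)"
proof -
  have "YX a b f = lsc (eigE a b n) f \<longleftrightarrow>
      (\<forall>i\<in>lower_exps n - {n}. lk f i = recursion_rhs a b n (lk f) i)"
    if K: "ks f \<subseteq> lower_exps n"
  proof
    assume "YX a b f = lsc (eigE a b n) f"
    then show "\<forall>i\<in>lower_exps n - {n}. lk f i = recursion_rhs a b n (lk f) i"
      using lookup_YX_inside[OF sep K] by (simp add: lookup_lsc)
  next
    assume rec: "\<forall>i\<in>lower_exps n - {n}. lk f i = recursion_rhs a b n (lk f) i"
    show "YX a b f = lsc (eigE a b n) f"
    proof (rule poly_mapping_eqI)
      fix i
      show "lk (YX a b f) i = lk (lsc (eigE a b n) f) i"
        using lookup_YX_outside[OF K, of i a b] lookup_YX_inside[OF sep K, of i] rec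
        by (cases "i \<in> lower_exps n - {n}") (auto simp: lookup_lsc)
    qed
  qed
  moreover have "(\<forall>j\<in>ks f. j = n \<or> \<bar>j\<bar> < \<bar>n\<bar> \<or> (j = -n \<and> 0 < j)) \<longleftrightarrow> ks f \<subseteq> lower_exps n"
    using lower_exps_iff by blast
  ultimately show ?thesis unfolding isE_def by blast
qed

lemma isE_unique:
  assumes sep: "eig_separated a b n" and "isE a b n f" "isE a b n g"
  shows "f = g"
proof -
  note F = assms(2)[unfolded isE_iff_recursion[OF sep]]
  note G = assms(3)[unfolded isE_iff_recursion[OF sep]]
  have "lk f i = lk g i" for i
  proof (induction i rule: lower_exps_induct[of n])
    case (1 i)
    consider "i \<notin> lower_exps n" | "i = n" | "i \<in> lower_exps n - {n}" by blast
    then show ?case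
    proof cases
      case 1
      then show ?thesis using F G by (metis in_keys_iff subsetD)
    next
      case 2
      then show ?thesis using F G by simp
    next
      case 3
      then show ?thesis using F G recursion_rhs_cong[of n i "lk f" "lk g"] 1 by simp
    qed
  qed
  then show ?thesis by (intro poly_mapping_eqI)
qed

function E_coeff :: "complex \<Rightarrow> complex \<Rightarrow> int \<Rightarrow> int \<Rightarrow> complex" where
  "E_coeff a b n i = (if i = n then 1 else if exp_rank i < exp_rank n then
     (b - inverse b) *
       (\<Sum>j\<in>{j. exp_rank i < exp_rank j \<and> exp_rank j \<le> exp_rank n}. E_coeff a b n j * dd_coeff j (-i))
       * resolvent a b n i
     else 0)"
  by pat_completeness auto
termination
  by (relation "Wellfounded.measure (\<lambda>(a, b, n, i). nat (exp_rank n - exp_rank i))") auto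

declare E_coeff.simps [simp del]

lemma E_coeff_support: "E_coeff a b n i \<noteq> 0 \<Longrightarrow> i \<in> lower_exps n"
  by (subst (asm) E_coeff.simps) (auto simp: lower_exps_def split: if_splits)

lemma isE_E_coeff:
  assumes sep: "eig_separated a b n"
  shows "isE a b n (Abs_poly_mapping (E_coeff a b n))"
proof -
  have "finite {i. E_coeff a b n i \<noteq> 0}"
    using E_coeff_support by (intro finite_subset[OF _ finite_lower_exps[of n]]) auto
  then have lk: "lk (Abs_poly_mapping (E_coeff a b n)) = E_coeff a b n" by simp
  show ?thesis unfolding isE_iff_recursion[OF sep] lk
  proof (intro conjI ballI)
    show "ks (Abs_poly_mapping (E_coeff a b n)) \<subseteq> lower_exps n"
      using E_coeff_support by (auto simp: in_keys_iff lk)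
    show "E_coeff a b n n = 1" by (simp add: E_coeff.simps)
  next
    fix i assume i: "i \<in> lower_exps n - {n}"
    then have lt: "exp_rank i < exp_rank n" using exp_rank_inj unfolding lower_exps_def by force
    have "(\<Sum>j\<in>lower_exps n - {i}. E_coeff a b n j * dd_coeff j (-i)) =
        (\<Sum>j\<in>{j. exp_rank i < exp_rank j \<and> exp_rank j \<le> exp_rank n}. E_coeff a b n j * dd_coeff j (-i))"
      using dd_coeff_triangular
      by (intro sum.mono_neutral_right) (auto simp: lower_exps_def[symmetric], auto simp: lower_exps_def)
    then show "E_coeff a b n i = recursion_rhs a b n (E_coeff a b n) i"
      unfolding recursion_rhs_def using i lt by (subst E_coeff.simps) simp
  qed
qed

lemma isE_Emac:
  assumes "eig_separated a b n"
  shows "isE a b n (Emac a b n)"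
  unfolding Emac_def
proof (rule theI)
  show "isE a b n (Abs_poly_mapping (E_coeff a b n))" by (rule isE_E_coeff[OF assms])
qed (rule isE_unique[OF assms _ isE_E_coeff[OF assms]])

lemma tendsto_inverse_powi_diff_at_right:
  fixes u v :: complex and k :: int
  assumes k: "k \<noteq> 0" and u: "u \<noteq> 0" and v: "v \<noteq> 0"
  shows "\<forall>\<^sub>F x in at_right 0. complex_of_real x powi k * u - v \<noteq> 0" (is ?ev)
    and "((\<lambda>x. inverse (complex_of_real x powi k * u - v)) \<longlongrightarrow> (if 0 < k then - inverse v else 0))
           (at_right 0)" (is ?lim)
proof -
  have to_zero: "((\<lambda>x. complex_of_real x) \<longlongrightarrow> 0) (at_right 0)"
    by (rule tendsto_eq_intros refl)+ simp
  have nonzero: "\<forall>\<^sub>F x in at_right 0. complex_of_real x \<noteq> 0"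
    using eventually_at_right_less[of "0::real"] by (auto elim: eventually_mono)
  have "?ev \<and> ?lim"
  proof (cases "0 < k")
    case True
    have "((\<lambda>x. complex_of_real x ^ nat k * u - v) \<longlongrightarrow> 0 ^ nat k * u - v) (at_right 0)"
      by (intro tendsto_intros to_zero)
    then have lim: "((\<lambda>x. complex_of_real x powi k * u - v) \<longlongrightarrow> - v) (at_right 0)"
      using True by (simp add: power_int_nonneg_exp zero_power)
    show ?thesis
      using tendsto_imp_eventually_ne[OF lim, of 0] tendsto_inverse[OF lim] v True by simp
  next
    case False
    define m where "m = nat (-k)"
    have m: "0 < m" using k False by (simp add: m_def)
    have "((\<lambda>x. u - complex_of_real x ^ m * v) \<longlongrightarrow> u - 0 ^ m * v) (at_right 0)"
      by (intro tendsto_intros to_zero)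
    then have h: "((\<lambda>x. u - complex_of_real x ^ m * v) \<longlongrightarrow> u) (at_right 0)"
      using m by (simp add: zero_power)
    have split: "complex_of_real x powi k * u - v = (u - complex_of_real x ^ m * v) / complex_of_real x ^ m"
      if "complex_of_real x \<noteq> 0" for x
      using that False by (simp add: m_def power_int_def field_simps)
    have "\<forall>\<^sub>F x in at_right 0. complex_of_real x powi k * u - v \<noteq> 0"
      using tendsto_imp_eventually_ne[OF h u] nonzero by eventually_elim (simp add: split)
    moreover have "((\<lambda>x. inverse (complex_of_real x powi k * u - v)) \<longlongrightarrow> 0) (at_right 0)"
    proof (rule Lim_transform_eventually)
      have "((\<lambda>x. complex_of_real x ^ m / (u - complex_of_real x ^ m * v)) \<longlongrightarrow> 0 ^ m / u)
          (at_right 0)"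
        by (intro tendsto_intros to_zero h u)
      then show "((\<lambda>x. complex_of_real x ^ m / (u - complex_of_real x ^ m * v)) \<longlongrightarrow> 0) (at_right 0)"
        using m by (simp add: zero_power)
      show "\<forall>\<^sub>F x in at_right 0. complex_of_real x ^ m / (u - complex_of_real x ^ m * v) =
          inverse (complex_of_real x powi k * u - v)"
        using nonzero by eventually_elim (simp add: split)
    qed
    ultimately show ?thesis using False by simp
  qed
  then show ?ev ?lim by blast+
qed

definition t_factor :: "complex \<Rightarrow> int \<Rightarrow> complex" where
  "t_factor b i = (if i \<le> 0 then b else inverse b)"

lemma t_factor_nonzero: "b \<noteq> 0 \<Longrightarrow> t_factor b i \<noteq> 0"
  unfolding t_factor_def by auto

lemma eigE_diff:
  assumes "a \<noteq> 0"
  shows "eigE a b n - eigE a b i = a powi (-i) * (a powi (i - n) * t_factor b n - t_factor b i)"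
proof -
  have "a powi (-n) = a powi (-i) * a powi (i - n)"
    using assms power_int_add[of a "-i" "i - n"] by simp
  then show ?thesis unfolding eigE_def t_factor_def by (simp add: algebra_simps)
qed

lemma resolvent_eq:
  "a \<noteq> 0 \<Longrightarrow> resolvent a b n i = inverse (a powi (i - n) * t_factor b n - t_factor b i)"
  unfolding resolvent_def eigE_diff[of a b n i] by (simp add: power_int_minus divide_inverse)

lemma eventually_eig_separated:
  assumes "b \<noteq> 0"
  shows "\<forall>\<^sub>F x in at_right 0. eig_separated (complex_of_real x) b n"
proof -
  have "\<forall>\<^sub>F x in at_right 0. complex_of_real x \<noteq> 0"
    using eventually_at_right_less[of "0::real"] by (auto elim: eventually_mono)
  moreover have "\<forall>\<^sub>F x in at_right 0. \<forall>i\<in>lower_exps n - {n}.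
      complex_of_real x powi (i - n) * t_factor b n - t_factor b i \<noteq> 0"
    using tendsto_inverse_powi_diff_at_right(1) t_factor_nonzero[OF assms]
    by (intro eventually_ball_finite) auto
  ultimately show ?thesis
    unfolding eig_separated_def
  proof eventually_elim
    case (elim x)
    show ?case
    proof (intro conjI ballI)
      fix i assume i: "i \<in> lower_exps n - {n}"
      have "eigE (complex_of_real x) b n - eigE (complex_of_real x) b i \<noteq> 0"
        using elim i by (simp add: eigE_diff)
      then show "eigE (complex_of_real x) b n \<noteq> eigE (complex_of_real x) b i" by simp
    qed (use elim in simp)
  qed
qed

definition resolvent_lim :: "complex \<Rightarrow> int \<Rightarrow> int \<Rightarrow> complex" where
  "resolvent_lim b n i = (if n < i then - inverse (t_factor b i) else 0)"

lemma tendsto_resolvent: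
  assumes "i \<noteq> n" "b \<noteq> 0"
  shows "((\<lambda>x. resolvent (complex_of_real x) b n i) \<longlongrightarrow> resolvent_lim b n i) (at_right 0)"
proof (rule Lim_transform_eventually)
  show "((\<lambda>x. inverse (complex_of_real x powi (i - n) * t_factor b n - t_factor b i))
      \<longlongrightarrow> resolvent_lim b n i) (at_right 0)"
    using tendsto_inverse_powi_diff_at_right(2)[of "i - n"] assms t_factor_nonzero
    unfolding resolvent_lim_def by auto
  show "\<forall>\<^sub>F x in at_right 0. inverse (complex_of_real x powi (i - n) * t_factor b n - t_factor b i)
      = resolvent (complex_of_real x) b n i"
    using eventually_at_right_less[of "0::real"] by eventually_elim (simp add: resolvent_eq)
qed

definition E_lim_coeff :: "complex \<Rightarrow> int \<Rightarrow> int \<Rightarrow> complex" where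
  "E_lim_coeff b n i = (if i = n then 1
     else if n < 0 \<and> n < i \<and> i \<le> -n \<and> even (i - n) then 1 - b\<^sup>2 else 0)"

lemma E_lim_coeff_outside: "i \<notin> lower_exps n \<Longrightarrow> E_lim_coeff b n i = 0"
  unfolding E_lim_coeff_def using lower_exps_neg by auto

lemma sum_odd_function_symmetric:
  fixes g :: "int \<Rightarrow> 'a::field_char_0"
  assumes "\<And>j. g (-j) = - g j"
  shows "(\<Sum>j\<in>{-k..k}. g j) = 0"
proof -
  have "(\<Sum>j\<in>{-k..k}. g j) = (\<Sum>j\<in>{-k..k}. g (-j))"
    by (rule sum.reindex_bij_witness[of _ uminus uminus]) auto
  also have "\<dots> = - (\<Sum>j\<in>{-k..k}. g j)" by (simp add: assms sum_negf)
  finally show ?thesis by simp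
qed

text \<open>Antisymmetry of \<open>dd_coeff\<close> in its first argument kills everything except the two
  boundary terms \<open>j = n\<close> and \<open>j = -n\<close>.\<close>
lemma sum_E_lim_coeff_dd_coeff:
  assumes n: "n < 0" and i: "n < i" "i \<le> -n"
  shows "(\<Sum>j\<in>{n..-n} - {i}. E_lim_coeff b n j * dd_coeff j (-i)) =
    (if even (i - n) then (if 0 < i then 1 else b\<^sup>2) else 0)"
proof -
  define g where "g j = (if even (j - n) then dd_coeff j (-i) else 0)" for j
  have dd_n: "dd_coeff n (-i) = (if even (i - n) then 1 else 0)"
  proof -
    have "even (i - n) \<Longrightarrow> n + 2 \<le> i" using i by presburger
    moreover have "even (-i + n) = even (i - n)" by presburger
    ultimately show ?thesis unfolding dd_coeff_def using n i by auto
  qed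
  have "{n..-n} - {i} = insert n ({n<..-n} - {i})" using i by auto
  then have "(\<Sum>j\<in>{n..-n} - {i}. E_lim_coeff b n j * dd_coeff j (-i)) =
      dd_coeff n (-i) + (\<Sum>j\<in>{n<..-n} - {i}. E_lim_coeff b n j * dd_coeff j (-i))"
    by (simp add: E_lim_coeff_def)
  also have "(\<Sum>j\<in>{n<..-n} - {i}. E_lim_coeff b n j * dd_coeff j (-i)) =
      (\<Sum>j\<in>{n<..-n} - {i}. (1 - b\<^sup>2) * g j)"
    by (intro sum.cong) (auto simp: E_lim_coeff_def g_def n)
  also have "(\<Sum>j\<in>{n<..-n} - {i}. (1 - b\<^sup>2) * g j) = (1 - b\<^sup>2) * ((\<Sum>j\<in>{n<..-n}. g j) - g i)"
    using i by (simp add: sum_distrib_left[symmetric] sum_diff1)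
  also have "(\<Sum>j\<in>{n<..-n}. g j) = g (-n) + (\<Sum>j\<in>{-(-n-1)..-n-1}. g j)"
  proof -
    have "{n<..-n} = insert (-n) {-(-n-1)..-n-1}" using n by auto
    then show ?thesis by simp
  qed
  also have "(\<Sum>j\<in>{-(-n-1)..-n-1}. g j) = 0"
  proof (rule sum_odd_function_symmetric)
    fix j
    have "even (-j - n) = even (j - n)" by presburger
    then show "g (-j) = - g j" unfolding g_def by (simp add: dd_coeff_uminus)
  qed
  also have "g (-n) = - (if even (i - n) then 1 else 0)"
    unfolding g_def using dd_n dd_coeff_uminus[of n "-i"] by simp
  also have "g i = (if even (i - n) \<and> 0 < i then -1 else 0)"
    unfolding g_def dd_coeff_def by (auto simp: sgn_if)
  finally show ?thesis using dd_n by (auto simp: algebra_simps)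
qed

lemma E_lim_coeff_recursion:
  assumes i: "i \<in> lower_exps n - {n}" and b: "b \<noteq> 0"
  shows "E_lim_coeff b n i =
    (b - inverse b) * (\<Sum>j\<in>lower_exps n - {i}. E_lim_coeff b n j * dd_coeff j (-i)) * resolvent_lim b n i"
proof (cases "0 \<le> n")
  case True
  then show ?thesis
    using lower_exps_nonneg[OF True i] i by (simp add: resolvent_lim_def E_lim_coeff_def)
next
  case False
  then have n: "n < 0" by simp
  have i': "n < i" "i \<le> -n" using i lower_exps_neg[OF n] by auto
  show ?thesis
    unfolding lower_exps_neg[OF n] sum_E_lim_coeff_dd_coeff[OF n i'] using n i' b
    by (auto simp: resolvent_lim_def E_lim_coeff_def t_factor_def field_simps power2_eq_square)
qed

lemma eventually_Emac_recursion:
  assumes "b \<noteq> 0"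
  shows "\<forall>\<^sub>F x in at_right 0. ks (Emac (complex_of_real x) b n) \<subseteq> lower_exps n \<and>
    lk (Emac (complex_of_real x) b n) n = 1 \<and>
    (\<forall>i\<in>lower_exps n - {n}. lk (Emac (complex_of_real x) b n) i =
       recursion_rhs (complex_of_real x) b n (lk (Emac (complex_of_real x) b n)) i)"
  using eventually_eig_separated[OF assms, of n]
  by eventually_elim (use isE_Emac isE_iff_recursion in blast)

lemma tendsto_lookup_Emac:
  assumes b: "b \<noteq> 0"
  shows "((\<lambda>x. lk (Emac (complex_of_real x) b n) i) \<longlongrightarrow> E_lim_coeff b n i) (at_right 0)"
proof -
  define G where "G x = Emac (complex_of_real x) b n" for x
  have G: "\<forall>\<^sub>F x in at_right 0. ks (G x) \<subseteq> lower_exps n \<and> lk (G x) n = 1 \<and>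
      (\<forall>i\<in>lower_exps n - {n}. lk (G x) i = recursion_rhs (complex_of_real x) b n (lk (G x)) i)"
    using eventually_Emac_recursion[OF b] unfolding G_def .
  have "((\<lambda>x. lk (G x) i) \<longlongrightarrow> E_lim_coeff b n i) (at_right 0)"
  proof (induction i rule: lower_exps_induct[of n])
    case (1 i)
    consider "i \<notin> lower_exps n" | "i = n" | "i \<in> lower_exps n - {n}" by blast
    then show ?case
    proof cases
      case outside: 1
      have "\<forall>\<^sub>F x in at_right 0. lk (G x) i = 0"
        using G by eventually_elim (use outside in \<open>auto simp: in_keys_iff\<close>)
      then show ?thesis using E_lim_coeff_outside[OF outside] tendsto_eventually by auto
    next
      case 2
      have "\<forall>\<^sub>F x in at_right 0. lk (G x) i = 1"
        using G by eventually_elim (use 2 in simp)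
      then show ?thesis using 2 tendsto_eventually by (auto simp: E_lim_coeff_def)
    next
      case lower: 3
      have summand: "((\<lambda>x. lk (G x) j * dd_coeff j (-i)) \<longlongrightarrow> E_lim_coeff b n j * dd_coeff j (-i))
          (at_right 0)" if "j \<in> lower_exps n - {i}" for j
      proof (cases "dd_coeff j (-i) = 0")
        case False
        then have "exp_rank i < exp_rank j" using dd_coeff_triangular[of j i] that by auto
        then show ?thesis using 1[of j] that by (intro tendsto_mult[OF _ tendsto_const]) auto
      qed simp
      have "((\<lambda>x. recursion_rhs (complex_of_real x) b n (lk (G x)) i) \<longlongrightarrow>
          (b - inverse b) * (\<Sum>j\<in>lower_exps n - {i}. E_lim_coeff b n j * dd_coeff j (-i))
            * resolvent_lim b n i) (at_right 0)"
        unfolding recursion_rhs_def using summand lower b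
        by (intro tendsto_mult[OF tendsto_mult[OF tendsto_const tendsto_sum] tendsto_resolvent]) auto
      moreover have "\<forall>\<^sub>F x in at_right 0.
          recursion_rhs (complex_of_real x) b n (lk (G x)) i = lk (G x) i"
        using G by eventually_elim (use lower in simp)
      ultimately show ?thesis
        unfolding E_lim_coeff_recursion[OF lower b] by (rule Lim_transform_eventually)
    qed
  qed
  then show ?thesis unfolding G_def .
qed

lemma sum_parity_reindex:
  fixes h :: "int \<Rightarrow> 'a::comm_monoid_add"
  shows "(\<Sum>j\<in>{-int m<..int m}. if even (j + int m) then h j else 0) = (\<Sum>t<m. h (int m - 2 * int t))"
proof -
  have img: "(\<lambda>t. int m - 2 * int t) ` {..<m} = {j\<in>{-int m<..int m}. even (j + int m)}"
  proof (intro equalityI subsetI)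
    fix j assume "j \<in> {j\<in>{-int m<..int m}. even (j + int m)}"
    moreover from this have "even (j + int m)" by simp
    then have "even (int m - j)" by presburger
    then obtain d where "int m - j = 2 * d" by (rule evenE)
    ultimately have "j = int m - 2 * int (nat d)" "nat d < m" by auto
    then show "j \<in> (\<lambda>t. int m - 2 * int t) ` {..<m}" by blast
  qed auto
  have "inj_on (\<lambda>t. int m - 2 * int t) {..<m}" by (auto simp: inj_on_def)
  then have "(\<Sum>t<m. h (int m - 2 * int t)) = (\<Sum>j\<in>{j\<in>{-int m<..int m}. even (j + int m)}. h j)"
    unfolding img[symmetric] by (simp add: sum.reindex)
  then show ?thesis
    using sum.inter_filter[of "{-int m<..int m}" h "\<lambda>j. even (j + int m)"] by simp
qed

lemma E_lim_coeff_eval: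
  assumes b: "b \<noteq> 0"
  shows "(\<Sum>j\<in>lower_exps n. E_lim_coeff b n j * inverse b powi j) = b powi (-\<bar>n\<bar>)"
proof (cases "0 \<le> n")
  case True
  have "(\<Sum>j\<in>lower_exps n. E_lim_coeff b n j * inverse b powi j) =
      (\<Sum>j\<in>lower_exps n. if j = n then inverse b powi j else 0)"
    by (intro sum.cong) (use True in \<open>auto simp: E_lim_coeff_def\<close>)
  also have "\<dots> = inverse b powi n" by simp
  finally show ?thesis using True by (simp add: power_int_inverse power_int_minus)
next
  case False
  then have "n < 0" by simp
  define m where "m = nat (-n)"
  have n: "n = - int m" using False by (simp add: m_def)
  have lead: "E_lim_coeff b n n * inverse b powi n = b ^ m"
    by (simp add: E_lim_coeff_def n power_int_minus power_inverse)
  have rest: "(\<Sum>j\<in>{n<..-n}. E_lim_coeff b n j * inverse b powi j) =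
      (\<Sum>j\<in>{-int m<..int m}. if even (j + int m) then (1 - b\<^sup>2) * inverse b powi j else 0)"
    by (intro sum.cong) (auto simp: E_lim_coeff_def n)
  have "{n..-n} = insert n {n<..-n}" using n by auto
  then have "(\<Sum>j\<in>lower_exps n. E_lim_coeff b n j * inverse b powi j) =
      b ^ m + (\<Sum>j\<in>{-int m<..int m}. if even (j + int m) then (1 - b\<^sup>2) * inverse b powi j else 0)"
    unfolding lower_exps_neg[OF \<open>n < 0\<close>] using lead rest by simp
  also have "(\<Sum>j\<in>{-int m<..int m}. if even (j + int m) then (1 - b\<^sup>2) * inverse b powi j else 0)
      = (\<Sum>t<m. (1 - b\<^sup>2) * (inverse (b ^ m) * (b\<^sup>2) ^ t))"
  proof -
    have "b powi (2 * int t) = (b\<^sup>2) ^ t" for t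
      by (simp add: power_int_def nat_mult_distrib flip: power_mult)
    then have "inverse b powi (int m - 2 * int t) = inverse (b ^ m) * (b\<^sup>2) ^ t" for t
      using b by (simp add: power_int_diff power_int_inverse divide_inverse mult.commute
        flip: power_int_minus)
    then show ?thesis
      unfolding sum_parity_reindex[where h = "\<lambda>j. (1 - b\<^sup>2) * inverse b powi j"] by simp
  qed
  also have "\<dots> = inverse (b ^ m) * (1 - (b\<^sup>2) ^ m)"
    by (simp add: sum_distrib_left[symmetric] one_diff_power_eq mult.left_commute)
  also have "b ^ m + \<dots> = inverse (b ^ m)"
    using b by (simp add: field_simps power_mult_distrib mult_2_right power_add flip: power_mult)
  finally show ?thesis by (simp add: n power_int_minus)
qed

lemma tendsto_lookup_Eratio:
  assumes b: "b \<noteq> 0"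
  shows "((\<lambda>x. lk (Eratio (complex_of_real x) b n) j) \<longlongrightarrow> b powi \<bar>n\<bar> * E_lim_coeff b n j) (at_right 0)"
proof -
  define G where "G x = Emac (complex_of_real x) b n" for x
  have "((\<lambda>x. \<Sum>i\<in>lower_exps n. lk (G x) i * inverse b powi i) \<longlongrightarrow> b powi (-\<bar>n\<bar>)) (at_right 0)"
    unfolding E_lim_coeff_eval[OF b, symmetric] G_def
    by (intro tendsto_sum tendsto_mult[OF tendsto_lookup_Emac[OF b] tendsto_const])
  moreover have "\<forall>\<^sub>F x in at_right 0.
      (\<Sum>i\<in>lower_exps n. lk (G x) i * inverse b powi i) = leval (G x) (inverse b)"
    using eventually_Emac_recursion[OF b, of n] unfolding G_def
    by eventually_elim (unfold leval_def, rule sum_keys_superset[symmetric], auto)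
  ultimately have "((\<lambda>x. leval (G x) (inverse b)) \<longlongrightarrow> b powi (-\<bar>n\<bar>)) (at_right 0)"
    by (rule Lim_transform_eventually)
  then have "((\<lambda>x. inverse (leval (G x) (inverse b)) * lk (G x) j) \<longlongrightarrow>
      inverse (b powi (-\<bar>n\<bar>)) * E_lim_coeff b n j) (at_right 0)"
    using b unfolding G_def by (intro tendsto_mult tendsto_inverse tendsto_lookup_Emac) auto
  then show ?thesis unfolding Eratio_def G_def lookup_lsc by (simp add: power_int_minus)
qed

locale hecke_A1 =
  fixes emb :: "complex \<Rightarrow> 'r::ring_1" and b :: complex and T \<pi> Yi :: 'r
  assumes b_nonzero: "b \<noteq> 0" and emb: "calg_emb emb" and pi_square: "\<pi> * \<pi> = 1"
    and hecke_quadratic: "(T - emb b) * (T + emb (inverse b)) = 0"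
    and Y_Yi: "(\<pi> * T) * Yi = 1" and Yi_Y: "Yi * (\<pi> * T) = 1"
begin

lemma emb_one: "emb 1 = 1"
  and emb_add: "emb (x + y) = emb x + emb y"
  and emb_mult: "emb (x * y) = emb x * emb y"
  and emb_commute: "emb z * r = r * emb z"
  using emb unfolding calg_emb_def by blast+

lemma emb_zero: "emb 0 = 0"
  using emb_add[of 0 0] by simp

lemma emb_uminus: "emb (- x) = - emb x"
  using emb_add[of x "-x"] emb_zero minus_unique[of "emb x" "emb (-x)"] by simp

lemma emb_diff: "emb (x - y) = emb x - emb y"
  using emb_add[of x "-y"] emb_uminus by simp

definition c where "c = b - inverse b"
definition Y where "Y = \<pi> * T"
definition T_inv where "T_inv = T - emb c"
definition P where "P = Pplus emb b T"

lemma emb_b_inverse: "emb b * emb (inverse b) = 1"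
  and emb_inverse_b: "emb (inverse b) * emb b = 1"
  using b_nonzero emb_mult[of b "inverse b"] emb_mult[of "inverse b" b] emb_one by simp_all

lemma T_square: "T * T = emb c * T + 1"
proof -
  have "0 = T * T + T * emb (inverse b) - emb b * T - emb b * emb (inverse b)"
    using hecke_quadratic by (simp add: algebra_simps)
  also have "\<dots> = T * T - (emb c * T + 1)"
    unfolding emb_b_inverse c_def emb_diff emb_commute[of "inverse b" T, symmetric]
    by (simp add: algebra_simps)
  finally show ?thesis by (metis right_minus_eq)
qed

lemma T_T_inv: "T * T_inv = 1"
  unfolding T_inv_def using T_square emb_commute[of c T, symmetric] by (simp add: algebra_simps)

lemma T_inv_T: "T_inv * T = 1"
  unfolding T_inv_def using T_square by (simp add: algebra_simps)

lemma T_P: "T * P = emb b * P"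
proof -
  define k where "k = inverse (1 + b\<^sup>2)"
  have bc: "emb b * emb c = emb b * emb b - 1"
    unfolding emb_mult[symmetric] emb_one[symmetric] emb_diff[symmetric] c_def
    using b_nonzero by (simp add: algebra_simps power2_eq_square)
  have P: "P = emb k * (1 + emb b * T)" unfolding P_def Pplus_def k_def ..
  have "T * (1 + emb b * T) = T + emb b * (T * T)"
    by (simp add: distrib_left mult.assoc[symmetric] emb_commute[of b T, symmetric])
  also have "\<dots> = T + (emb b * emb c) * T + emb b"
    unfolding T_square by (simp add: distrib_left mult.assoc)
  also have "\<dots> = emb b * (1 + emb b * T)"
    unfolding bc by (simp add: algebra_simps)
  finally have eigen: "T * (1 + emb b * T) = emb b * (1 + emb b * T)" .
  have "T * P = emb k * (T * (1 + emb b * T))"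
    unfolding P by (simp add: mult.assoc[symmetric] emb_commute[of k T])
  also have "\<dots> = emb b * P"
    unfolding eigen P by (simp add: mult.assoc[symmetric] emb_commute[of k "emb b"])
  finally show ?thesis .
qed

lemma T_inv_P: "T_inv * P = emb (inverse b) * P"
proof -
  have "emb (inverse b) * P = emb (inverse b) * (T_inv * (T * P))"
    by (simp add: mult.assoc[symmetric] T_inv_T)
  also have "\<dots> = emb (inverse b) * (T_inv * emb b * P)"
    unfolding T_P by (simp add: mult.assoc)
  also have "T_inv * emb b = emb b * T_inv" by (rule emb_commute[symmetric])
  also have "emb (inverse b) * (emb b * T_inv * P) = (emb (inverse b) * emb b) * (T_inv * P)"
    by (simp add: mult.assoc)
  finally show ?thesis unfolding emb_inverse_b by simp
qed

lemma Yi_eq: "Yi = T_inv * \<pi>"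
proof -
  have "Y * (T_inv * \<pi>) = 1"
    unfolding Y_def by (simp add: mult.assoc[symmetric]) (simp add: mult.assoc T_T_inv pi_square)
  then have "Yi * (Y * (T_inv * \<pi>)) = Yi" by simp
  then show ?thesis using Yi_Y unfolding Y_def by (simp add: mult.assoc[symmetric])
qed

lemma T_Y: "T * Y = Yi * T + emb c * Y"
proof -
  have "Yi * T = T_inv * Y" unfolding Yi_eq Y_def by (simp add: mult.assoc)
  moreover have "T = T_inv + emb c" unfolding T_inv_def by simp
  ultimately show ?thesis by (metis distrib_right)
qed

definition Ypow :: "int \<Rightarrow> 'r" where
  "Ypow j = (if 0 \<le> j then Y ^ nat j else Yi ^ nat (-j))"

lemma Ypow_mult_Y: "Ypow j * Y = Ypow (j + 1)"
proof (cases "0 \<le> j")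
  case True
  then show ?thesis unfolding Ypow_def by (simp add: power_Suc2[symmetric] nat_add_distrib)
next
  case False
  then obtain k where k: "nat (-j) = Suc k" by (cases "nat (-j)") auto
  have "Yi ^ Suc k * Y = Yi ^ k"
    unfolding power_Suc2 mult.assoc using Yi_Y unfolding Y_def by simp
  moreover have "nat (-(j + 1)) = k" "j + 1 = 0 \<Longrightarrow> k = 0" using k by auto
  ultimately show ?thesis using False k unfolding Ypow_def by auto
qed

lemma Yi_power: "Yi ^ m = Ypow (- int m)"
  unfolding Ypow_def by (cases m) (auto simp: nat_add_distrib)

definition Ysum :: "nat \<Rightarrow> 'r" where
  "Ysum m = (\<Sum>t<m. Ypow (int m - 2 * int t))"

lemma Ysum_Suc: "Ysum (Suc m) = Ysum m * Y + Yi ^ m * Y"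
proof -
  have "Ysum m * Y = (\<Sum>t<m. Ypow (int (Suc m) - 2 * int t))"
    unfolding Ysum_def sum_distrib_right Ypow_mult_Y by (simp add: algebra_simps)
  moreover have "Yi ^ m * Y = Ypow (int (Suc m) - 2 * int m)"
    unfolding Yi_power Ypow_mult_Y by simp
  ultimately show ?thesis unfolding Ysum_def by simp
qed

lemma T_Y_power: "T * Y ^ m = Yi ^ m * T + emb c * Ysum m"
proof (induction m)
  case 0
  then show ?case by (simp add: Ysum_def)
next
  case (Suc m)
  have "T * Y ^ Suc m = Yi ^ m * (T * Y) + emb c * (Ysum m * Y)"
    by (simp only: power_Suc2 mult.assoc[symmetric] Suc) (simp add: algebra_simps)
  also have "\<dots> = Yi ^ Suc m * T + emb c * (Yi ^ m * Y + Ysum m * Y)"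
    unfolding T_Y
    by (simp add: distrib_left distrib_right mult.assoc[symmetric] power_commutes
        emb_commute[of c "Yi ^ m", symmetric] add.assoc)
  finally show ?case unfolding Ysum_Suc by (simp add: algebra_simps)
qed

lemma T_pi_power: "(T * \<pi>) ^ m = T * Y ^ m * T_inv"
proof (induction m)
  case 0
  then show ?case by (simp add: T_T_inv)
next
  case (Suc m)
  have "(T * \<pi>) ^ Suc m = T * Y ^ m * (T_inv * T) * \<pi>"
    unfolding power_Suc2 Suc by (simp add: mult.assoc)
  also have "\<dots> = T * Y ^ Suc m * T_inv"
    unfolding T_inv_T power_Suc2 Y_def by (simp add: mult.assoc T_T_inv)
  finally show ?case .
qed

lemma T_pi_power_P:
  "(T * \<pi>) ^ m * P = emb (inverse b) * (emb b * (Yi ^ m * P) + emb c * (Ysum m * P))"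
proof -
  have "(T * \<pi>) ^ m * P = (T * Y ^ m) * (T_inv * P)"
    unfolding T_pi_power by (simp add: mult.assoc)
  also have "\<dots> = (T * Y ^ m * emb (inverse b)) * P"
    unfolding T_inv_P by (simp add: mult.assoc)
  also have "T * Y ^ m * emb (inverse b) = emb (inverse b) * (T * Y ^ m)"
    by (rule emb_commute[symmetric])
  also have "emb (inverse b) * (T * Y ^ m) * P = emb (inverse b) * ((T * Y ^ m) * P)"
    by (simp add: mult.assoc)
  also have "(T * Y ^ m) * P = Yi ^ m * (T * P) + emb c * (Ysum m * P)"
    unfolding T_Y_power by (simp add: algebra_simps)
  also have "Yi ^ m * (T * P) = emb b * (Yi ^ m * P)"
    unfolding T_P by (simp add: mult.assoc[symmetric] emb_commute[of b "Yi ^ m"])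
  finally show ?thesis .
qed

lemma aeval_eq_sum:
  "ks f \<subseteq> S \<Longrightarrow> finite S \<Longrightarrow> aeval emb (\<pi> * T) Yi f = (\<Sum>j\<in>S. emb (lk f j) * Ypow j)"
  unfolding aeval_def Ypow_def Y_def by (rule sum_keys_superset) (auto simp: emb_zero)

end

definition e_coeff_poly :: "int \<Rightarrow> int \<Rightarrow> complex poly" where
  "e_coeff_poly n j = (if j = n then monom 1 (nat \<bar>n\<bar>)
     else if n < 0 \<and> n < j \<and> j \<le> -n \<and> even (j - n) then monom 1 (nat (-n)) - monom 1 (nat (-n) + 2)
     else 0)"

lemma e_coeff_poly_support: "e_coeff_poly n j \<noteq> 0 \<Longrightarrow> j \<in> lower_exps n"
  unfolding e_coeff_poly_def using lower_exps_neg[of n] by (auto split: if_splits)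

lemma finite_e_coeff_poly_support: "finite {j. e_coeff_poly n j \<noteq> 0}"
  using e_coeff_poly_support by (intro finite_subset[OF _ finite_lower_exps[of n]]) auto

lemma poly_e_coeff_poly: "poly (e_coeff_poly n j) b = b powi \<bar>n\<bar> * E_lim_coeff b n j"
  by (auto simp: e_coeff_poly_def E_lim_coeff_def poly_monom power_int_def algebra_simps
      power_add power2_eq_square)

definition e_lim :: "int \<Rightarrow> complex \<Rightarrow> lpoly" where
  "e_lim n x = Abs_poly_mapping (\<lambda>j. poly (e_coeff_poly n j) x)"

lemma lookup_e_lim: "lk (e_lim n x) = (\<lambda>j. poly (e_coeff_poly n j) x)"
proof -
  have "finite {j. poly (e_coeff_poly n j) x \<noteq> 0}"
    by (rule finite_subset[OF _ finite_e_coeff_poly_support[of n]]) auto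
  then show ?thesis unfolding e_lim_def by simp
qed

lemma keys_e_lim: "ks (e_lim n x) \<subseteq> lower_exps n"
  using e_coeff_poly_support by (auto simp: in_keys_iff lookup_e_lim) (metis poly_0)

lemma filterlim_sqrt_at_right_0: "filterlim sqrt (at_right 0) (at_right (0::real))"
  unfolding filterlim_at
proof
  show "\<forall>\<^sub>F x in at_right 0. sqrt x \<in> {0<..} \<and> sqrt x \<noteq> 0"
    using eventually_at_right_less[of "0::real"] by (auto elim: eventually_mono)
  show "(sqrt \<longlongrightarrow> 0) (at_right (0::real))"
    using tendsto_real_sqrt[OF tendsto_ident_at, of 0 "{0<..}"] by simp
qed

context hecke_A1
begin

lemma aeval_e_lim_nonneg:
  assumes "0 \<le> n"
  shows "aeval emb (\<pi> * T) Yi (e_lim n x) = emb (x ^ nat n) * Y ^ nat n"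
proof -
  have "aeval emb (\<pi> * T) Yi (e_lim n x) = (\<Sum>j\<in>lower_exps n. emb (lk (e_lim n x) j) * Ypow j)"
    by (rule aeval_eq_sum[OF keys_e_lim finite_lower_exps])
  also have "\<dots> = (\<Sum>j\<in>lower_exps n. if j = n then emb (x ^ nat n) * Ypow n else 0)"
    by (intro sum.cong) (use assms in \<open>auto simp: lookup_e_lim e_coeff_poly_def poly_monom emb_zero\<close>)
  finally show ?thesis using assms by (simp add: Ypow_def)
qed

lemma aeval_e_lim_neg:
  assumes n: "n = - int m" "0 < m"
  shows "aeval emb (\<pi> * T) Yi (e_lim n x) =
    emb (x ^ m) * Yi ^ m + emb (x ^ m - x ^ (m + 2)) * Ysum m"
proof -
  have lead: "emb (lk (e_lim n x) n) * Ypow n = emb (x ^ m) * Yi ^ m"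
    by (simp add: lookup_e_lim e_coeff_poly_def poly_monom n Ypow_def)
  have rest: "(\<Sum>j\<in>{n<..-n}. emb (lk (e_lim n x) j) * Ypow j) =
      (\<Sum>j\<in>{-int m<..int m}. if even (j + int m) then emb (x ^ m - x ^ (m + 2)) * Ypow j else 0)"
    by (intro sum.cong) (auto simp: lookup_e_lim e_coeff_poly_def poly_monom n emb_zero)
  have "n < 0" "{n..-n} = insert n {n<..-n}" using n by auto
  then have "aeval emb (\<pi> * T) Yi (e_lim n x) = emb (x ^ m) * Yi ^ m +
      (\<Sum>j\<in>{-int m<..int m}. if even (j + int m) then emb (x ^ m - x ^ (m + 2)) * Ypow j else 0)"
    unfolding aeval_eq_sum[OF keys_e_lim finite_lower_exps] lower_exps_neg[OF \<open>n < 0\<close>]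
    using lead rest by simp
  also have "(\<Sum>j\<in>{-int m<..int m}. if even (j + int m) then emb (x ^ m - x ^ (m + 2)) * Ypow j else 0)
      = emb (x ^ m - x ^ (m + 2)) * Ysum m"
    unfolding sum_parity_reindex[where h = "\<lambda>j. emb (x ^ m - x ^ (m + 2)) * Ypow j"] Ysum_def
    by (simp add: sum_distrib_left)
  finally show ?thesis .
qed

lemma e_lim_Y_P_eq_psi: "aeval emb (\<pi> * T) Yi (e_lim n (inverse b)) * P = psi emb b T \<pi> n"
proof (cases "0 \<le> n")
  case True
  then show ?thesis
    unfolding aeval_e_lim_nonneg[OF True] psi_def Tnw_def P_def Y_def by (simp add: mult.assoc)
next
  case False
  define m where "m = nat (-n)"
  have n: "n = - int m" "0 < m" using False by (auto simp: m_def)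
  define bi where "bi = inverse b"
  have "psi emb b T \<pi> n = emb (bi ^ m) * ((T * \<pi>) ^ m * P)"
    unfolding psi_def Tnw_def P_def using n by (simp add: m_def bi_def mult.assoc)
  also have "\<dots> = emb (bi ^ m * bi * b) * (Yi ^ m * P) + emb (bi ^ m * bi * c) * (Ysum m * P)"
    unfolding T_pi_power_P bi_def by (simp add: emb_mult distrib_left mult.assoc)
  also have "bi ^ m * bi * b = bi ^ m" using b_nonzero by (simp add: bi_def)
  also have "bi ^ m * bi * c = bi ^ m - bi ^ (m + 2)"
    using b_nonzero by (simp add: bi_def c_def algebra_simps power_add power2_eq_square)
  finally show ?thesis
    unfolding aeval_e_lim_neg[OF n] bi_def by (simp add: distrib_right mult.assoc)
qed

end

theorem theorem7p1:
  fixes n :: int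
  shows "\<exists>e :: complex \<Rightarrow> lpoly.
    (\<forall>b. \<not> algebraic b \<longrightarrow>
       (\<forall>j. ((\<lambda>q::real. Poly_Mapping.lookup (Eratio (complex_of_real (sqrt q)) b n) j)
               \<longlongrightarrow> Poly_Mapping.lookup (e b) j) (at_right 0)))
  \<and> (\<exists>P Q :: int \<Rightarrow> complex poly. finite {j. P j \<noteq> 0} \<and>
       (\<forall>b. \<not> algebraic b \<longrightarrow>
          (\<forall>j. poly (Q j) b \<noteq> 0 \<and> Poly_Mapping.lookup (e b) j = poly (P j) b / poly (Q j) b)))
  \<and> (\<forall>b (emb :: complex \<Rightarrow> 'r::ring_1) T \<pi> Yi.
       \<not> algebraic b \<and> calg_emb emb \<and> \<pi> * \<pi> = 1 \<and>
       (T - emb b) * (T + emb (inverse b)) = 0 \<and>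
       (\<pi> * T) * Yi = 1 \<and> Yi * (\<pi> * T) = 1 \<longrightarrow>
       aeval emb (\<pi> * T) Yi (e (inverse b)) * Pplus emb b T = psi emb b T \<pi> n)"
proof (intro exI[of _ "e_lim n"] conjI allI impI)
  fix b :: complex and j :: int
  assume "\<not> algebraic b"
  then have "b \<noteq> 0" by auto
  then have "((\<lambda>x. lk (Eratio (complex_of_real x) b n) j) \<longlongrightarrow> lk (e_lim n b) j) (at_right 0)"
    using tendsto_lookup_Eratio by (simp add: lookup_e_lim poly_e_coeff_poly)
  then show "((\<lambda>q::real. lk (Eratio (complex_of_real (sqrt q)) b n) j) \<longlongrightarrow> lk (e_lim n b) j) (at_right 0)"
    by (rule filterlim_compose[OF _ filterlim_sqrt_at_right_0])
next
  show "\<exists>P Q :: int \<Rightarrow> complex poly. finite {j. P j \<noteq> 0} \<and>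
      (\<forall>b. \<not> algebraic b \<longrightarrow> (\<forall>j. poly (Q j) b \<noteq> 0 \<and> lk (e_lim n b) j = poly (P j) b / poly (Q j) b))"
    by (intro exI[of _ "e_coeff_poly n"] exI[of _ "\<lambda>_. 1"])
      (simp add: finite_e_coeff_poly_support lookup_e_lim)
next
  fix b :: complex and emb :: "complex \<Rightarrow> 'r::ring_1" and T \<pi> Yi :: 'r
  assume "\<not> algebraic b \<and> calg_emb emb \<and> \<pi> * \<pi> = 1 \<and>
       (T - emb b) * (T + emb (inverse b)) = 0 \<and> (\<pi> * T) * Yi = 1 \<and> Yi * (\<pi> * T) = 1"
  then interpret hecke_A1 emb b T \<pi> Yi by unfold_locales auto
  show "aeval emb (\<pi> * T) Yi (e_lim n (inverse b)) * Pplus emb b T = psi emb b T \<pi> n"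
    using e_lim_Y_P_eq_psi unfolding P_def .
qed

end
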